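(* Let $F=(F_1,\dots,F_m):[B(\mathcal H)^n]_1\to[B(\mathcal H)^m]_1$ be a free holomorphic function. Then (i) the map $\varphi(X_1,\dots,X_n):=[X_1,\dots,X_n]F'(0)^t$, i.e. $\varphi(X)=\left(\sum_ia^{(1)}_{g_i}X_i,\dots,\sum_ia^{(m)}_{g_i}X_i\right)$, maps $[B(\mathcal H)^n]_1$ into $[B(\mathcal H)^m]_1$; in particular $\|F'(0)\|\le1$. (ii) If $F(0)=0$, then $\|F(X)\|\le\|X\|$ for all $X\in[B(\mathcal H)^n]_1$. *)

theory Defs
  imports "HOL-Analysis.Analysis"
begin

text \<open>A complex Hilbert space is modelled as a real Hilbert space 'h together with a
  complex structure J (multiplication by i): J is real-linear, J (J x) = -x, and J is
  orthogonal.\<close>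

definition cstruct :: "('h::{real_inner,complete_space} \<Rightarrow> 'h) \<Rightarrow> bool" where
  "cstruct J \<longleftrightarrow> linear J \<and> (\<forall>x. J (J x) = - x) \<and> (\<forall>x y. inner (J x) (J y) = inner x y)"

definition cscale :: "('h::real_vector \<Rightarrow> 'h) \<Rightarrow> complex \<Rightarrow> 'h \<Rightarrow> 'h" where
  "cscale J c h = Re c *\<^sub>R h + Im c *\<^sub>R J h"

text \<open>B(H): bounded complex-linear operators on H.\<close>
definition bop :: "('h::{real_inner,complete_space} \<Rightarrow> 'h) \<Rightarrow> ('h \<Rightarrow> 'h) \<Rightarrow> bool" where
  "bop J T \<longleftrightarrow> bounded_linear T \<and> (\<forall>x. T (J x) = J (T x))"

text \<open>Norm of an n-tuple X = (X_0,...,X_{n-1}) of operators: the operator norm of the row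
  operator [X_1 ... X_n] : H^n \<rightarrow> H, which equals the norm of (X_1 X_1* + ... + X_n X_n*)^(1/2).\<close>
definition rownorm :: "nat \<Rightarrow> (nat \<Rightarrow> 'h::real_inner \<Rightarrow> 'h) \<Rightarrow> real" where
  "rownorm n X = Sup {norm (\<Sum>i<n. X i (h i)) | h. (\<Sum>i<n. (norm (h i))\<^sup>2) \<le> 1}"

definition ncball :: "('h::{real_inner,complete_space} \<Rightarrow> 'h) \<Rightarrow> nat \<Rightarrow> (nat \<Rightarrow> 'h \<Rightarrow> 'h) set" where
  "ncball J n = {X. (\<forall>i<n. bop J (X i)) \<and> rownorm n X < 1}"

definition words :: "nat \<Rightarrow> nat \<Rightarrow> nat list set" where
  "words n k = {\<alpha>. length \<alpha> = k \<and> set \<alpha> \<subseteq> {..<n}}"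

definition wordop :: "(nat \<Rightarrow> 'h \<Rightarrow> 'h) \<Rightarrow> nat list \<Rightarrow> 'h \<Rightarrow> 'h" where
  "wordop X \<alpha> = foldr (\<lambda>i T. X i \<circ> T) \<alpha> id"

text \<open>A formal power series \<Sum>_\<alpha> a_\<alpha> Z_\<alpha> in n noncommuting indeterminates is a free
  holomorphic function on the open unit ball iff its radius of convergence is \<ge> 1, i.e.
  limsup_k (\<Sum>_{|\<alpha>|=k} |a_\<alpha>|^2)^(1/2k) \<le> 1.\<close>
definition free_holo :: "nat \<Rightarrow> (nat list \<Rightarrow> complex) \<Rightarrow> bool" where
  "free_holo n a \<longleftrightarrow>
     limsup (\<lambda>k. ereal (root (2 * k) (\<Sum>\<alpha>\<in>words n k. (cmod (a \<alpha>))\<^sup>2))) \<le> 1"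

text \<open>Homogeneous part of degree k evaluated at X, and the value F(X) = \<Sum>_k \<Sum>_{|\<alpha>|=k} a_\<alpha> X_\<alpha>
  (series converging in operator norm on the ball; here evaluated pointwise).\<close>
definition homog :: "('h::real_vector \<Rightarrow> 'h) \<Rightarrow> nat \<Rightarrow> (nat list \<Rightarrow> complex) \<Rightarrow> nat
                     \<Rightarrow> (nat \<Rightarrow> 'h \<Rightarrow> 'h) \<Rightarrow> 'h \<Rightarrow> 'h" where
  "homog J n a k X h = (\<Sum>\<alpha>\<in>words n k. cscale J (a \<alpha>) (wordop X \<alpha> h))"

definition freeval :: "('h::real_normed_vector \<Rightarrow> 'h) \<Rightarrow> nat \<Rightarrow> (nat list \<Rightarrow> complex)
                       \<Rightarrow> (nat \<Rightarrow> 'h \<Rightarrow> 'h) \<Rightarrow> 'h \<Rightarrow> 'h" where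
  "freeval J n a X h = (\<Sum>k. homog J n a k X h)"

text \<open>The linear part: \<phi>(X) = [X_1,...,X_n] F'(0)^t, with F'(0) = (a^{(j)}_{g_i})_{j,i}.\<close>
definition linpart :: "('h::real_vector \<Rightarrow> 'h) \<Rightarrow> nat \<Rightarrow> (nat \<Rightarrow> nat list \<Rightarrow> complex)
                       \<Rightarrow> (nat \<Rightarrow> 'h \<Rightarrow> 'h) \<Rightarrow> nat \<Rightarrow> 'h \<Rightarrow> 'h" where
  "linpart J n a X j h = (\<Sum>i<n. cscale J (a j [i]) (X i h))"

definition derivnorm :: "nat \<Rightarrow> nat \<Rightarrow> (nat \<Rightarrow> nat list \<Rightarrow> complex) \<Rightarrow> real" where
  "derivnorm m n a = Sup {sqrt (\<Sum>j<m. (cmod (\<Sum>i<n. a j [i] * z i))\<^sup>2) | z.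
                           (\<Sum>i<n. (cmod (z i))\<^sup>2) \<le> 1}"

end

theory Submission
  imports Defs "HOL-Complex_Analysis.Complex_Analysis"
begin

(* The whole argument reduces to one-variable complex analysis on scalar "slices".  For Y in the
   open ball [B(H)^n]_1, vectors h = (h_1,...,h_m) in the unit ball of H^m and e in H, the function
     z |-> < F_1(zY) h_1 + ... + F_m(zY) h_m , e >
   is the sum of a power series of radius > 1 (slice_fps), because the homogeneous parts of F decay
   geometrically on the ball (norm_word_sum_le, homog_decay).  Since F maps the ball into the ball,
   this slice function has modulus < norm e on the closed unit disc (norm_eval_slice_fps_less).
   (i)  Cauchy's estimate for its first Taylor coefficient with e = F_1(Y)h, where F_1 is the linear
        part, gives norm (F_1(Y)h) <= 1; rescaling X = sY then shows that phi = F_1 does not increase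
        the row norm, and testing phi on scalar tuples (t z_1 I, ..., t z_n I) bounds norm F'(0).
   (ii) If F(0) = 0, Schwarz's lemma for the slice with e = F(sY)h gives norm (F(sY)h) <= s, and
        letting s decrease to the norm of X = sY yields norm F(X) <= norm X. *)

section \<open>The complex structure of H\<close>

lemma le_of_square_le_mult:
  fixes x B :: real
  assumes "0 \<le> x" "0 \<le> B" "x\<^sup>2 \<le> x * B"
  shows "x \<le> B"
  using assms by (cases "x = 0") (auto simp: power2_eq_square)

text \<open>The complex inner product of H; it is complex-linear in its first argument.\<close>

definition cinner :: "('h::real_inner \<Rightarrow> 'h) \<Rightarrow> 'h \<Rightarrow> 'h \<Rightarrow> complex" where
  "cinner J x e = Complex (inner x e) (inner x (J e))"

lemma cscale_zero [simp]: "cscale J 0 x = 0"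
  by (simp add: cscale_def)

lemma cscale_one [simp]: "cscale J 1 x = x"
  by (simp add: cscale_def)

lemma cscale_of_real [simp]: "cscale J (complex_of_real r) x = r *\<^sub>R x"
  by (simp add: cscale_def)

context
  fixes J :: "'h::{real_inner,complete_space} \<Rightarrow> 'h"
  assumes J: "cstruct J"
begin

lemma J_linear: "linear J"
  using J by (simp add: cstruct_def)

lemma J_J [simp]: "J (J x) = - x"
  using J by (simp add: cstruct_def)

lemma J_inner: "inner (J x) (J y) = inner x y"
  using J by (simp add: cstruct_def)

lemma J_norm [simp]: "norm (J x) = norm x"
  using J_inner[of x x] by (simp add: norm_eq_sqrt_inner)

lemma inner_J_left: "inner (J x) y = - inner x (J y)"
  using J_inner[of "J x" y] by simp

lemma inner_J_self [simp]: "inner x (J x) = 0"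
  using inner_J_left[of x x] by (simp add: inner_commute)

lemma cscale_linear: "linear (cscale J c)"
  by (rule linearI) (simp_all add: cscale_def linear_add[OF J_linear] linear_scale[OF J_linear]
      algebra_simps)

lemma cscale_sum: "cscale J c (\<Sum>i\<in>A. g i) = (\<Sum>i\<in>A. cscale J c (g i))"
  by (rule linear_sum[OF cscale_linear])

lemma cscale_scaleR: "cscale J c (r *\<^sub>R x) = r *\<^sub>R cscale J c x"
  by (rule linear_scale[OF cscale_linear])

lemma cscale_sum_left: "cscale J (\<Sum>i\<in>A. c i) x = (\<Sum>i\<in>A. cscale J (c i) x)"
  by (induction A rule: infinite_finite_induct) (auto simp: cscale_def algebra_simps)

lemma cscale_J: "cscale J c (J x) = J (cscale J c x)"
  by (simp add: cscale_def linear_add[OF J_linear] linear_scale[OF J_linear])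

lemma cscale_mult: "cscale J (c * d) x = cscale J c (cscale J d x)"
  by (simp add: cscale_def linear_add[OF J_linear] linear_scale[OF J_linear] algebra_simps)

lemma cscale_commute: "cscale J c (cscale J d x) = cscale J d (cscale J c x)"
  by (simp add: cscale_mult[symmetric] mult.commute)

text \<open>J is an isometry orthogonal to the identity, so c acts on H with norm |c|.\<close>

lemma norm_cscale: "norm (cscale J c x) = cmod c * norm x"
proof -
  have "(norm (cscale J c x))\<^sup>2 = ((Re c)\<^sup>2 + (Im c)\<^sup>2) * inner x x"
    unfolding power2_norm_eq_inner
    by (simp add: cscale_def inner_add_left inner_add_right J_inner inner_J_left,
        simp add: inner_commute[of "J x" x] algebra_simps power2_eq_square)
  also have "\<dots> = (cmod c * norm x)\<^sup>2"
    by (simp add: cmod_def power_mult_distrib power2_norm_eq_inner)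
  finally show ?thesis by (simp add: power2_eq_iff_nonneg)
qed

lemma bounded_linear_cscale: "bounded_linear (cscale J c)"
  using cscale_linear norm_cscale
  by (intro bounded_linear_intro[where K="cmod c"]) (simp_all add: linear_add linear_scale mult.commute)

lemma bop_cscale: "bop J (cscale J c)"
  by (simp add: bop_def bounded_linear_cscale cscale_J)

lemma bop_commute_cscale:
  assumes "bop J T"
  shows "T (cscale J c x) = cscale J c (T x)"
proof -
  have "linear T" using assms by (simp add: bop_def bounded_linear.linear)
  thus ?thesis using assms by (simp add: bop_def cscale_def linear_add linear_scale)
qed

lemma bop_comp: "bop J S \<Longrightarrow> bop J T \<Longrightarrow> bop J (S \<circ> T)"
  by (auto simp: bop_def o_def intro: bounded_linear_compose)

lemma bop_sum:
  assumes "\<And>i. i \<in> A \<Longrightarrow> bop J (T i)"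
  shows "bop J (\<lambda>x. \<Sum>i\<in>A. T i x)"
  using assms by (auto simp: bop_def linear_sum[OF J_linear] intro!: bounded_linear_sum)

lemma bounded_linear_cinner: "bounded_linear (\<lambda>x. cinner J x e)"
proof (rule bounded_linear_intro[where K="2 * norm e"])
  fix x
  have "norm (cinner J x e) \<le> \<bar>inner x e\<bar> + \<bar>inner x (J e)\<bar>"
    unfolding cinner_def cmod_def by (simp add: sqrt_sum_squares_le_sum_abs)
  also have "\<dots> \<le> norm x * norm e + norm x * norm (J e)"
    by (intro add_mono Cauchy_Schwarz_ineq2)
  finally show "norm (cinner J x e) \<le> norm x * (2 * norm e)" by (simp add: algebra_simps)
qed (simp_all add: cinner_def complex_eq_iff inner_add_left)

lemma cinner_cscale: "cinner J (cscale J c x) e = c * cinner J x e"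
  by (simp add: cinner_def cscale_def complex_eq_iff inner_add_left inner_J_left)

lemma cinner_self: "cinner J x x = complex_of_real ((norm x)\<^sup>2)"
  by (simp add: cinner_def complex_eq_iff power2_norm_eq_inner)

lemma norm_cinner: "norm (cinner J x e) \<le> norm x * norm e"
proof -
  define c where "c = cinner J x e"
  have "(cmod c)\<^sup>2 = Re (cinner J (cscale J (cnj c) x) e)"
    by (simp add: cinner_cscale c_def cmod_power2 flip: power2_eq_square)
  also have "\<dots> \<le> norm (cscale J (cnj c) x) * norm e"
    unfolding cinner_def by (simp add: norm_cauchy_schwarz)
  also have "\<dots> = cmod c * (norm x * norm e)"
    by (simp add: norm_cscale)
  finally have "(cmod c)\<^sup>2 \<le> cmod c * (norm x * norm e)" .
  thus ?thesis
    using le_of_square_le_mult[of "cmod c" "norm x * norm e"] by (simp add: c_def)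
qed

end

section \<open>Row norms of operator tuples; words and homogeneous parts\<close>

lemma rownorm_le:
  assumes "\<And>h. (\<Sum>i<n. (norm (h i))\<^sup>2) \<le> 1 \<Longrightarrow> norm (\<Sum>i<n. T i (h i)) \<le> R"
  shows "rownorm n T \<le> R"
  unfolding rownorm_def
  by (rule cSup_least) (use assms in \<open>auto intro!: exI[of _ "\<lambda>_. 0"]\<close>)

lemma rownorm_bdd_above:
  fixes T :: "nat \<Rightarrow> 'a::real_normed_vector \<Rightarrow> 'b::real_normed_vector"
  assumes bl: "\<forall>i<n. bounded_linear (T i)"
  shows "bdd_above {norm (\<Sum>i<n. T i (h i)) |h. (\<Sum>i<n. (norm (h i))\<^sup>2) \<le> 1}"
proof -
  have "\<forall>i<n. \<exists>K>0. \<forall>x. norm (T i x) \<le> norm x * K"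
    using bl bounded_linear.pos_bounded by blast
  then obtain K where K: "\<And>i x. i < n \<Longrightarrow> norm (T i x) \<le> norm x * K i" "\<And>i. i < n \<Longrightarrow> K i > 0"
    by metis
  have "norm (\<Sum>i<n. T i (h i)) \<le> (\<Sum>i<n. K i)" if h: "(\<Sum>i<n. (norm (h i))\<^sup>2) \<le> 1" for h
  proof -
    have "norm (T i (h i)) \<le> K i" if i: "i < n" for i
    proof -
      have "(norm (h i))\<^sup>2 \<le> (\<Sum>i<n. (norm (h i))\<^sup>2)"
        by (rule member_le_sum) (use i in auto)
      hence "(norm (h i))\<^sup>2 \<le> 1\<^sup>2" using h by simp
      hence "norm (h i) \<le> 1" by (rule power2_le_imp_le) simp
      hence "norm (h i) * K i \<le> K i" using K(2)[OF i] by (simp add: mult_le_cancel_right1)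
      thus ?thesis using K(1)[OF i, of "h i"] by linarith
    qed
    hence "(\<Sum>i<n. norm (T i (h i))) \<le> (\<Sum>i<n. K i)" by (intro sum_mono) simp
    moreover have "norm (\<Sum>i<n. T i (h i)) \<le> (\<Sum>i<n. norm (T i (h i)))" by (rule norm_sum)
    ultimately show ?thesis by linarith
  qed
  thus ?thesis by (intro bdd_aboveI[where M="\<Sum>i<n. K i"]) blast
qed

lemma rownorm_ge:
  assumes "\<forall>i<n. bounded_linear (T i)" "(\<Sum>i<n. (norm (h i))\<^sup>2) \<le> 1"
  shows "norm (\<Sum>i<n. T i (h i)) \<le> rownorm n T"
  unfolding rownorm_def by (rule cSup_upper) (use assms rownorm_bdd_above in auto)

lemma rownorm_nonneg:
  assumes "\<forall>i<n. bounded_linear (T i)"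
  shows "0 \<le> rownorm n T"
proof -
  have "norm (\<Sum>i<n. T i ((\<lambda>_. 0) i)) \<le> rownorm n T" by (rule rownorm_ge[OF assms]) simp
  thus ?thesis by (meson norm_ge_zero order_trans)
qed

lemma rownorm_nonneg_ncball: "X \<in> ncball J n \<Longrightarrow> 0 \<le> rownorm n X"
  by (simp add: ncball_def bop_def rownorm_nonneg)

lemma norm_rowsum_le:
  assumes bl: "\<forall>i<n. bounded_linear (T i)"
  shows "norm (\<Sum>i<n. T i (h i)) \<le> rownorm n T * sqrt (\<Sum>i<n. (norm (h i))\<^sup>2)"
proof (cases "(\<Sum>i<n. (norm (h i))\<^sup>2) = 0")
  case True
  hence "\<forall>i<n. h i = 0" by (simp add: sum_nonneg_eq_0_iff)
  thus ?thesis using bl by (simp add: linear_0 bounded_linear.linear)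
next
  case False
  define s where "s = sqrt (\<Sum>i<n. (norm (h i))\<^sup>2)"
  have s0: "s > 0" using False by (simp add: s_def sum_nonneg order_le_neq_trans)
  define g where "g i = (1 / s) *\<^sub>R h i" for i
  have "(\<Sum>i<n. (norm (g i))\<^sup>2) = (\<Sum>i<n. (norm (h i))\<^sup>2) / s\<^sup>2"
    using s0 by (simp add: g_def power_divide sum_divide_distrib)
  also have "\<dots> = 1" using s0 by (simp add: s_def sum_nonneg)
  finally have g: "(\<Sum>i<n. (norm (g i))\<^sup>2) \<le> 1" by simp
  have "(\<Sum>i<n. T i (g i)) = (1 / s) *\<^sub>R (\<Sum>i<n. T i (h i))"
    using bl by (simp add: g_def linear_scale bounded_linear.linear scaleR_sum_right)
  hence "norm (\<Sum>i<n. T i (h i)) / s \<le> rownorm n T"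
    using rownorm_ge[OF bl g] s0 by simp
  thus ?thesis using s0 by (simp add: s_def field_simps)
qed

lemma norm_rowsum_less_one:
  assumes bl: "\<forall>i<n. bounded_linear (T i)" and T: "rownorm n T < 1"
    and h: "(\<Sum>i<n. (norm (h i))\<^sup>2) \<le> 1"
  shows "norm (\<Sum>i<n. T i (h i)) < 1"
proof -
  have "norm (\<Sum>i<n. T i (h i)) \<le> rownorm n T * sqrt (\<Sum>i<n. (norm (h i))\<^sup>2)"
    by (rule norm_rowsum_le[OF bl])
  also have "\<dots> \<le> rownorm n T * 1"
    using h rownorm_nonneg[OF bl] by (intro mult_left_mono) simp_all
  finally show ?thesis using T by simp
qed

lemma words_0: "words n 0 = {[]}"
  by (auto simp: words_def)

lemma sum_words_Suc:
  "(\<Sum>\<alpha>\<in>words n (Suc k). f \<alpha>) = (\<Sum>i<n. \<Sum>\<beta>\<in>words n k. f (i # \<beta>))"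
proof -
  have words_Suc: "words n (Suc k) = (\<lambda>(i, \<beta>). i # \<beta>) ` ({..<n} \<times> words n k)"
    by (auto simp: words_def length_Suc_conv image_iff)
  have inj: "inj_on (\<lambda>(i, \<beta>). i # \<beta>) ({..<n} \<times> words n k)"
    by (auto simp: inj_on_def)
  have "(\<Sum>\<alpha>\<in>words n (Suc k). f \<alpha>) = (\<Sum>(i, \<beta>)\<in>{..<n} \<times> words n k. f (i # \<beta>))"
    unfolding words_Suc by (subst sum.reindex[OF inj]) (simp add: case_prod_unfold)
  also have "\<dots> = (\<Sum>i<n. \<Sum>\<beta>\<in>words n k. f (i # \<beta>))"
    by (rule sum.cartesian_product[symmetric])
  finally show ?thesis .
qed

lemma sum_words_1: "(\<Sum>\<alpha>\<in>words n 1. f \<alpha>) = (\<Sum>i<n. f [i])"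
  using sum_words_Suc[where k=0 and n=n and f=f] by (simp add: words_0)

lemma wordop_Nil [simp]: "wordop X [] = id"
  by (simp add: wordop_def)

lemma wordop_Cons [simp]: "wordop X (i # \<beta>) = X i \<circ> wordop X \<beta>"
  by (simp add: wordop_def)

lemma homog_0: "homog J n a 0 X x = cscale J (a []) x"
  by (simp add: homog_def words_0)

lemma homog_1: "homog J n a 1 X x = (\<Sum>i<n. cscale J (a [i]) (X i x))"
  unfolding homog_def sum_words_1 by simp

text \<open>The basic estimate of free analysis:
  norm (\<Sum>_{|\<alpha>|=k} X_\<alpha> h_\<alpha>) \<le> rownorm X ^ k * (\<Sum>_{|\<alpha>|=k} norm h_\<alpha>^2)^(1/2),
  obtained by peeling off the first letter of each word and applying the row estimate.\<close>

lemma norm_word_sum_le: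
  assumes X: "\<forall>i<n. bounded_linear (X i)"
  shows "norm (\<Sum>\<alpha>\<in>words n k. wordop X \<alpha> (h \<alpha>))
           \<le> (rownorm n X) ^ k * sqrt (\<Sum>\<alpha>\<in>words n k. (norm (h \<alpha>))\<^sup>2)"
proof (induction k arbitrary: h)
  case 0
  thus ?case by (simp add: words_0)
next
  case (Suc k)
  define R where "R = rownorm n X"
  have R0: "R \<ge> 0" unfolding R_def by (rule rownorm_nonneg[OF X])
  define g where "g i = (\<Sum>\<beta>\<in>words n k. wordop X \<beta> (h (i # \<beta>)))" for i
  have "(\<Sum>\<alpha>\<in>words n (Suc k). wordop X \<alpha> (h \<alpha>)) = (\<Sum>i<n. X i (g i))"
    unfolding sum_words_Suc g_def using X by (simp add: linear_sum bounded_linear.linear)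
  hence "norm (\<Sum>\<alpha>\<in>words n (Suc k). wordop X \<alpha> (h \<alpha>)) \<le> R * sqrt (\<Sum>i<n. (norm (g i))\<^sup>2)"
    using norm_rowsum_le[OF X, of g] by (simp add: R_def)
  also have "\<dots> \<le> R * sqrt (\<Sum>i<n. (R ^ k)\<^sup>2 * (\<Sum>\<beta>\<in>words n k. (norm (h (i # \<beta>)))\<^sup>2))"
  proof (intro mult_left_mono R0 real_sqrt_le_mono sum_mono)
    fix i
    have "norm (g i) \<le> R ^ k * sqrt (\<Sum>\<beta>\<in>words n k. (norm (h (i # \<beta>)))\<^sup>2)"
      unfolding g_def R_def by (rule Suc.IH)
    hence "(norm (g i))\<^sup>2 \<le> (R ^ k * sqrt (\<Sum>\<beta>\<in>words n k. (norm (h (i # \<beta>)))\<^sup>2))\<^sup>2"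
      by (intro power_mono) auto
    thus "(norm (g i))\<^sup>2 \<le> (R ^ k)\<^sup>2 * (\<Sum>\<beta>\<in>words n k. (norm (h (i # \<beta>)))\<^sup>2)"
      by (simp add: power_mult_distrib sum_nonneg)
  qed
  also have "\<dots> = R ^ Suc k * sqrt (\<Sum>\<alpha>\<in>words n (Suc k). (norm (h \<alpha>))\<^sup>2)"
    using R0 by (simp add: sum_words_Suc sum_distrib_left[symmetric] real_sqrt_mult)
  finally show ?case by (simp add: R_def)
qed

definition tscale :: "('h::real_vector \<Rightarrow> 'h) \<Rightarrow> complex \<Rightarrow> (nat \<Rightarrow> 'h \<Rightarrow> 'h) \<Rightarrow> nat \<Rightarrow> 'h \<Rightarrow> 'h" where
  "tscale J c X = (\<lambda>i. cscale J c \<circ> X i)"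

context
  fixes J :: "'h::{real_inner,complete_space} \<Rightarrow> 'h"
  assumes J: "cstruct J"
begin

lemma wordop_cscale:
  assumes X: "\<forall>i<n. bop J (X i)" and \<alpha>: "set \<alpha> \<subseteq> {..<n}"
  shows "wordop X \<alpha> (cscale J c x) = cscale J c (wordop X \<alpha> x)"
  using \<alpha> by (induction \<alpha>) (simp_all add: X bop_commute_cscale[OF J])

lemma norm_homog_le:
  assumes X: "\<forall>i<n. bop J (X i)"
  shows "norm (homog J n a k X x)
           \<le> (rownorm n X) ^ k * sqrt (\<Sum>\<alpha>\<in>words n k. (cmod (a \<alpha>))\<^sup>2) * norm x"
proof -
  have bl: "\<forall>i<n. bounded_linear (X i)" using X by (simp add: bop_def)
  have "homog J n a k X x = (\<Sum>\<alpha>\<in>words n k. wordop X \<alpha> (cscale J (a \<alpha>) x))"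
    unfolding homog_def using wordop_cscale[OF X] by (intro sum.cong) (auto simp: words_def)
  hence "norm (homog J n a k X x)
           \<le> (rownorm n X) ^ k * sqrt (\<Sum>\<alpha>\<in>words n k. (norm (cscale J (a \<alpha>) x))\<^sup>2)"
    using norm_word_sum_le[OF bl, where k=k and h="\<lambda>\<alpha>. cscale J (a \<alpha>) x"] by simp
  also have "(\<Sum>\<alpha>\<in>words n k. (norm (cscale J (a \<alpha>) x))\<^sup>2)
               = (\<Sum>\<alpha>\<in>words n k. (cmod (a \<alpha>))\<^sup>2) * (norm x)\<^sup>2"
    by (simp add: norm_cscale[OF J] power_mult_distrib sum_distrib_right)
  finally show ?thesis by (simp add: real_sqrt_mult mult_ac)
qed

lemma bop_tscale: "bop J (X i) \<Longrightarrow> bop J (tscale J c X i)"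
  unfolding tscale_def by (rule bop_comp[OF J bop_cscale[OF J]])

lemma tscale_tscale: "tscale J c (tscale J d X) = tscale J (c * d) X"
  by (simp add: tscale_def fun_eq_iff cscale_mult[OF J])

lemma tscale_one: "tscale J 1 X = X"
  by (simp add: tscale_def fun_eq_iff)

lemma rownorm_tscale_le:
  assumes X: "\<forall>i<n. bop J (X i)"
  shows "rownorm n (tscale J c X) \<le> cmod c * rownorm n X"
proof (rule rownorm_le)
  fix h :: "nat \<Rightarrow> 'h" assume h: "(\<Sum>i<n. (norm (h i))\<^sup>2) \<le> 1"
  have bl: "\<forall>i<n. bounded_linear (X i)" using X by (simp add: bop_def)
  have "norm (\<Sum>i<n. tscale J c X i (h i)) = cmod c * norm (\<Sum>i<n. X i (h i))"
    by (simp add: tscale_def cscale_sum[OF J, symmetric] norm_cscale[OF J])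
  also have "\<dots> \<le> cmod c * rownorm n X"
    by (intro mult_left_mono rownorm_ge[OF bl h]) simp
  finally show "norm (\<Sum>i<n. tscale J c X i (h i)) \<le> cmod c * rownorm n X" .
qed

lemma homog_tscale:
  assumes X: "\<forall>i<n. bop J (X i)"
  shows "homog J n a k (tscale J c X) x = cscale J (c ^ k) (homog J n a k X x)"
proof -
  have wordop: "wordop (tscale J c X) \<alpha> x = cscale J (c ^ length \<alpha>) (wordop X \<alpha> x)"
    if "set \<alpha> \<subseteq> {..<n}" for \<alpha> x
    using that
  proof (induction \<alpha> arbitrary: x)
    case (Cons i \<beta>)
    thus ?case using X bop_commute_cscale[OF J] by (simp add: tscale_def cscale_mult[OF J])
  qed simp
  show ?thesis
    unfolding homog_def cscale_sum[OF J]
    by (intro sum.cong refl) (auto simp: wordop words_def cscale_commute[OF J])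
qed

lemma ball_rescale:
  assumes X: "X \<in> ncball J n" and s: "rownorm n X < s" "s < 1"
  shows "tscale J (complex_of_real (1 / s)) X \<in> ncball J n"
    and "tscale J (complex_of_real s) (tscale J (complex_of_real (1 / s)) X) = X"
proof -
  have Xb: "\<forall>i<n. bop J (X i)" using X by (simp add: ncball_def)
  have s0: "s > 0" using rownorm_nonneg_ncball[OF X] s by linarith
  have "rownorm n (tscale J (complex_of_real (1 / s)) X) \<le> rownorm n X / s"
    using rownorm_tscale_le[OF Xb, of "complex_of_real (1 / s)"] s0 by (simp add: norm_divide)
  also have "\<dots> < 1" using s s0 by (simp add: field_simps)
  finally show "tscale J (complex_of_real (1 / s)) X \<in> ncball J n"
    using Xb bop_tscale by (simp add: ncball_def)
  show "tscale J (complex_of_real s) (tscale J (complex_of_real (1 / s)) X) = X"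
    using s0 by (simp add: tscale_tscale tscale_one)
qed

end

section \<open>Convergence of free holomorphic functions on the ball\<close>

lemma free_holo_decay:
  assumes holo: "free_holo n a" and tau: "\<tau> > 1"
  shows "eventually (\<lambda>k. sqrt (\<Sum>\<alpha>\<in>words n k. (cmod (a \<alpha>))\<^sup>2) \<le> \<tau> ^ k) sequentially"
proof -
  define A where "A k = (\<Sum>\<alpha>\<in>words n k. (cmod (a \<alpha>))\<^sup>2)" for k
  have "limsup (\<lambda>k. ereal (root (2 * k) (A k))) < ereal \<tau>"
    using holo tau unfolding free_holo_def A_def by (simp add: le_less_trans)
  hence "eventually (\<lambda>k. ereal (root (2 * k) (A k)) < ereal \<tau>) sequentially"
    by (rule Limsup_lessD)
  hence "eventually (\<lambda>k. sqrt (A k) \<le> \<tau> ^ k) sequentially"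
    using eventually_ge_at_top[of 1]
  proof eventually_elim
    case (elim k)
    have A0: "A k \<ge> 0" unfolding A_def by (rule sum_nonneg) simp
    have "A k = root (2 * k) (A k) ^ (2 * k)"
      using elim A0 by (simp add: real_root_pow_pos2)
    also have "\<dots> \<le> \<tau> ^ (2 * k)"
      using elim A0 by (intro power_mono) (simp_all add: real_root_ge_zero)
    finally have "sqrt (A k) \<le> sqrt ((\<tau> ^ k)\<^sup>2)"
      by (simp add: power_mult[symmetric] mult.commute)
    thus ?case using tau by simp
  qed
  thus ?thesis by (simp add: A_def)
qed

text \<open>The comparison test in a complete normed space (H need not carry the class banach).\<close>

lemma summable_comparison_complete:
  fixes f :: "nat \<Rightarrow> 'a::{real_normed_vector,complete_space}"
  assumes le: "eventually (\<lambda>k. norm (f k) \<le> g k) sequentially" and g: "summable g"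
  shows "summable f"
proof -
  have "summable (\<lambda>k. norm (f k))"
    by (rule summable_comparison_test_ev[OF _ g]) (use le in simp)
  hence tail: "\<forall>e>0. \<exists>N. \<forall>m\<ge>N. \<forall>n. norm (\<Sum>k\<in>{m..<n}. norm (f k)) < e"
    by (simp add: summable_Cauchy)
  have "Cauchy (\<lambda>n. sum f {..<n})"
  proof (rule metric_CauchyI)
    fix e :: real assume "e > 0"
    then obtain N where N: "\<And>m n. m \<ge> N \<Longrightarrow> norm (\<Sum>k\<in>{m..<n}. norm (f k)) < e"
      using tail by blast
    have "norm (sum f {m..<n}) < e" if "m \<ge> N" for m n
      using norm_sum[of f "{m..<n}"] N[OF that, of n] by simp
    hence "dist (sum f {..<m}) (sum f {..<n}) < e" if "m \<ge> N" "n \<ge> N" for m n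
      using that unfolding dist_norm
      by (cases m n rule: linorder_le_cases)
        (metis finite_lessThan lessThan_minus_lessThan lessThan_subset_iff norm_minus_commute sum_diff)+
    thus "\<exists>N. \<forall>m\<ge>N. \<forall>n\<ge>N. dist (sum f {..<m}) (sum f {..<n}) < e" by blast
  qed
  thus ?thesis by (simp add: summable_iff_convergent Cauchy_convergent_iff)
qed

lemma decay_rate:
  fixes R :: real
  assumes "0 \<le> R" "R < 1"
  obtains \<tau> where "\<tau> > 1" "0 \<le> \<tau> * R" "\<tau> * R < 1"
  using assms by (intro that[of "2 / (1 + R)"]) (simp_all add: field_simps)

context
  fixes J :: "'h::{real_inner,complete_space} \<Rightarrow> 'h"
  assumes J: "cstruct J"
begin

lemma homog_decay:
  assumes X: "\<forall>i<n. bop J (X i)" and holo: "free_holo n a" and tau: "\<tau> > 1"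
  shows "eventually (\<lambda>k. \<forall>x. norm (homog J n a k X x) \<le> (\<tau> * rownorm n X) ^ k * norm x) sequentially"
  using free_holo_decay[OF holo tau]
proof eventually_elim
  case (elim k)
  have R0: "0 \<le> rownorm n X" using X by (simp add: bop_def rownorm_nonneg)
  show ?case
  proof
    fix x
    have "norm (homog J n a k X x)
            \<le> (rownorm n X) ^ k * sqrt (\<Sum>\<alpha>\<in>words n k. (cmod (a \<alpha>))\<^sup>2) * norm x"
      by (rule norm_homog_le[OF J X])
    also have "\<dots> \<le> (rownorm n X) ^ k * \<tau> ^ k * norm x"
      using elim R0 by (intro mult_right_mono mult_left_mono) simp_all
    finally show "norm (homog J n a k X x) \<le> (\<tau> * rownorm n X) ^ k * norm x"
      by (simp add: power_mult_distrib mult_ac)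
  qed
qed

lemma freeval_tscale_sums:
  assumes Y: "\<forall>i<n. bop J (Y i)" "rownorm n Y < 1" and holo: "free_holo n a"
    and c: "cmod c \<le> 1"
  shows "(\<lambda>k. cscale J (c ^ k) (homog J n a k Y x)) sums freeval J n a (tscale J c Y) x"
proof -
  have R0: "0 \<le> rownorm n Y" using Y by (simp add: bop_def rownorm_nonneg)
  obtain \<tau> where tau: "\<tau> > 1" "0 \<le> \<tau> * rownorm n Y" "\<tau> * rownorm n Y < 1"
    using decay_rate[OF R0 Y(2)] by blast
  have "summable (\<lambda>k. cscale J (c ^ k) (homog J n a k Y x))"
  proof (rule summable_comparison_complete)
    show "eventually (\<lambda>k. norm (cscale J (c ^ k) (homog J n a k Y x))
                            \<le> (\<tau> * rownorm n Y) ^ k * norm x) sequentially"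
      using homog_decay[OF Y(1) holo tau(1)]
    proof eventually_elim
      case (elim k)
      have "cmod c ^ k \<le> 1" using c by (simp add: power_le_one)
      hence "norm (cscale J (c ^ k) (homog J n a k Y x)) \<le> 1 * norm (homog J n a k Y x)"
        unfolding norm_cscale[OF J] norm_power by (rule mult_right_mono) simp
      thus ?case using elim order_trans by fastforce
    qed
    show "summable (\<lambda>k. (\<tau> * rownorm n Y) ^ k * norm x)"
      using tau by (intro summable_mult2 summable_geometric) simp
  qed
  thus ?thesis
    unfolding freeval_def by (simp add: homog_tscale[OF J Y(1)] summable_sums)
qed

end

section \<open>Scalar slices of a free holomorphic function\<close>

text \<open>For Y in the ball, h in H^m and e in H, the scalar function z \<mapsto> \<langle>\<Sum>_j F_j(zY) h_j, e\<rangle>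
  is a power series in z whose k-th coefficient comes from the homogeneous parts of degree k.\<close>

definition slice_fps :: "('h::real_inner \<Rightarrow> 'h) \<Rightarrow> nat \<Rightarrow> nat \<Rightarrow> (nat \<Rightarrow> nat list \<Rightarrow> complex)
                          \<Rightarrow> (nat \<Rightarrow> 'h \<Rightarrow> 'h) \<Rightarrow> (nat \<Rightarrow> 'h) \<Rightarrow> 'h \<Rightarrow> complex fps" where
  "slice_fps J m n a Y h e = Abs_fps (\<lambda>k. cinner J (\<Sum>j<m. homog J n (a j) k Y (h j)) e)"

context
  fixes J :: "'h::{real_inner,complete_space} \<Rightarrow> 'h"
  assumes J: "cstruct J"
begin

text \<open>Geometric decay of the homogeneous parts on the ball gives the slice series radius > 1.\<close>

lemma slice_fps_radius:
  assumes holo: "\<forall>j<m. free_holo n (a j)" and Y: "\<forall>i<n. bop J (Y i)" "rownorm n Y < 1"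
  shows "fps_conv_radius (slice_fps J m n a Y h e) > 1"
proof -
  have R0: "0 \<le> rownorm n Y" using Y by (simp add: bop_def rownorm_nonneg)
  obtain \<tau> where tau: "\<tau> > 1" "0 \<le> \<tau> * rownorm n Y" "\<tau> * rownorm n Y < 1"
    using decay_rate[OF R0 Y(2)] by blast
  define q where "q = \<tau> * rownorm n Y"
  define d where "d k = cinner J (\<Sum>j<m. homog J n (a j) k Y (h j)) e" for k
  have "eventually (\<lambda>k. \<forall>j\<in>{..<m}. \<forall>x. norm (homog J n (a j) k Y x) \<le> q ^ k * norm x) sequentially"
    using holo homog_decay[OF J Y(1) _ tau(1)] by (intro eventually_ball_finite) (simp_all add: q_def)
  hence d_le: "eventually (\<lambda>k. norm (d k) \<le> q ^ k * ((\<Sum>j<m. norm (h j)) * norm e)) sequentially"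
  proof eventually_elim
    case (elim k)
    have "norm (d k) \<le> norm (\<Sum>j<m. homog J n (a j) k Y (h j)) * norm e"
      unfolding d_def by (rule norm_cinner[OF J])
    also have "norm (\<Sum>j<m. homog J n (a j) k Y (h j)) \<le> (\<Sum>j<m. q ^ k * norm (h j))"
      using elim by (intro order_trans[OF norm_sum sum_mono]) simp
    finally show ?case by (simp add: sum_distrib_left mult_right_mono mult_ac)
  qed
  define \<rho> where "\<rho> = 2 / (1 + q)"
  have rho: "\<rho> > 1" "0 \<le> \<rho> * q" "\<rho> * q < 1"
    using tau by (auto simp: \<rho>_def q_def field_simps)
  have "summable (\<lambda>k. d k * of_real \<rho> ^ k)"
  proof (rule summable_comparison_test_ev)
    show "eventually (\<lambda>k. norm (d k * of_real \<rho> ^ k)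
                         \<le> (\<rho> * q) ^ k * ((\<Sum>j<m. norm (h j)) * norm e)) sequentially"
      using d_le
    proof eventually_elim
      case (elim k)
      have "norm (d k * of_real \<rho> ^ k) \<le> q ^ k * ((\<Sum>j<m. norm (h j)) * norm e) * \<rho> ^ k"
        using elim rho by (simp add: norm_mult norm_power mult_right_mono)
      thus ?case by (simp add: power_mult_distrib mult_ac)
    qed
    show "summable (\<lambda>k. (\<rho> * q) ^ k * ((\<Sum>j<m. norm (h j)) * norm e))"
      using rho by (intro summable_mult2 summable_geometric) simp
  qed
  hence "ereal \<rho> \<le> conv_radius d"
    using conv_radius_geI[of d "of_real \<rho>"] rho by simp
  moreover have "(1::ereal) < ereal \<rho>" using rho by simp
  ultimately have "1 < conv_radius d" by (rule less_le_trans[rotated])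
  thus ?thesis by (simp add: fps_conv_radius_def slice_fps_def d_def[abs_def])
qed

lemma eval_slice_fps:
  assumes holo: "\<forall>j<m. free_holo n (a j)" and Y: "\<forall>i<n. bop J (Y i)" "rownorm n Y < 1"
    and c: "cmod c \<le> 1"
  shows "eval_fps (slice_fps J m n a Y h e) c
           = cinner J (\<Sum>j<m. freeval J n (a j) (tscale J c Y) (h j)) e"
proof -
  define C where "C k = (\<Sum>j<m. cscale J (c ^ k) (homog J n (a j) k Y (h j)))" for k
  have sums: "(\<lambda>k. cscale J (c ^ k) (homog J n (a j) k Y (h j))) sums freeval J n (a j) (tscale J c Y) (h j)"
    if "j < m" for j
    using freeval_tscale_sums[OF J Y holo[rule_format, OF that] c] .
  hence "C sums (\<Sum>j<m. freeval J n (a j) (tscale J c Y) (h j))"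
    unfolding C_def by (intro sums_sum) simp
  hence "(\<lambda>k. cinner J (C k) e) sums cinner J (\<Sum>j<m. freeval J n (a j) (tscale J c Y) (h j)) e"
    by (rule bounded_linear.sums[OF bounded_linear_cinner[OF J]])
  moreover have "cinner J (C k) e = fps_nth (slice_fps J m n a Y h e) k * c ^ k" for k
    by (simp add: C_def slice_fps_def cscale_sum[OF J, symmetric] cinner_cscale[OF J] mult.commute)
  ultimately show ?thesis
    by (simp add: eval_fps_def sums_iff)
qed

lemma norm_eval_slice_fps_less:
  assumes holo: "\<forall>j<m. free_holo n (a j)"
    and maps: "\<forall>X\<in>ncball J n. (\<lambda>j. freeval J n (a j) X) \<in> ncball J m"
    and Y: "Y \<in> ncball J n" and h: "(\<Sum>j<m. (norm (h j))\<^sup>2) \<le> 1"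
    and e: "e \<noteq> 0" and c: "cmod c \<le> 1"
  shows "norm (eval_fps (slice_fps J m n a Y h e) c) < norm e"
proof -
  have Yb: "\<forall>i<n. bop J (Y i)" and Y1: "rownorm n Y < 1" using Y by (auto simp: ncball_def)
  have "rownorm n (tscale J c Y) \<le> cmod c * rownorm n Y" by (rule rownorm_tscale_le[OF J Yb])
  also have "\<dots> \<le> 1 * rownorm n Y"
    using c rownorm_nonneg_ncball[OF Y] by (rule mult_right_mono)
  finally have "tscale J c Y \<in> ncball J n"
    using Y1 Yb bop_tscale[OF J] by (simp add: ncball_def)
  hence "(\<lambda>j. freeval J n (a j) (tscale J c Y)) \<in> ncball J m" using maps by blast
  hence "norm (\<Sum>j<m. freeval J n (a j) (tscale J c Y) (h j)) < 1"
    using h by (intro norm_rowsum_less_one) (auto simp: ncball_def bop_def)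
  hence "norm (\<Sum>j<m. freeval J n (a j) (tscale J c Y) (h j)) * norm e < 1 * norm e"
    using e by (intro mult_strict_right_mono) simp_all
  thus ?thesis
    using eval_slice_fps[OF holo Yb Y1 c] norm_cinner[OF J] by (metis order_le_less_trans mult_1)
qed

end

section \<open>The two estimates from one-variable complex analysis\<close>

text \<open>A power series of radius greater than 1 is holomorphic near the closed unit disc.\<close>

lemma cball_subset_eball:
  fixes r :: ereal
  assumes "1 < r"
  shows "cball (0::'a::real_normed_vector) 1 \<subseteq> eball 0 r"
proof
  fix x :: 'a assume "x \<in> cball 0 1"
  hence "ereal (dist 0 x) \<le> 1" by (simp add: one_ereal_def)
  hence "ereal (dist 0 x) < r" using assms by (rule le_less_trans)
  thus "x \<in> eball 0 r" unfolding eball_def by simp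
qed

context
  fixes J :: "'h::{real_inner,complete_space} \<Rightarrow> 'h"
  assumes J: "cstruct J"
begin

text \<open>Cauchy's estimate for the first Taylor coefficient of the slice function
  z \<mapsto> \<langle>F(zY)h, C\<rangle> with C = F_1(Y)h shows that the linear part F_1 maps the ball
  into the closed unit ball of the row operators.\<close>

lemma norm_linear_part_le_one:
  assumes holo: "\<forall>j<m. free_holo n (a j)"
    and maps: "\<forall>X\<in>ncball J n. (\<lambda>j. freeval J n (a j) X) \<in> ncball J m"
    and Y: "Y \<in> ncball J n" and h: "(\<Sum>j<m. (norm (h j))\<^sup>2) \<le> 1"
  shows "norm (\<Sum>j<m. homog J n (a j) 1 Y (h j)) \<le> 1"
proof (cases "(\<Sum>j<m. homog J n (a j) 1 Y (h j)) = 0")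
  case False
  define C where "C = (\<Sum>j<m. homog J n (a j) 1 Y (h j))"
  define f where "f = slice_fps J m n a Y h C"
  have Yb: "\<forall>i<n. bop J (Y i)" and Y1: "rownorm n Y < 1" using Y by (auto simp: ncball_def)
  have rad: "1 < fps_conv_radius f"
    unfolding f_def by (rule slice_fps_radius[OF J holo Yb Y1])
  hence "cball (0::complex) 1 \<subseteq> eball 0 (fps_conv_radius f)" by (rule cball_subset_eball)
  hence hol: "eval_fps f holomorphic_on cball 0 1" by (rule holomorphic_on_eval_fps)
  have "norm ((deriv ^^ 1) (eval_fps f) 0) \<le> fact 1 * norm C / 1 ^ 1"
  proof (rule Cauchy_inequality)
    show "eval_fps f holomorphic_on ball 0 1" using hol by (rule holomorphic_on_subset) auto
    show "continuous_on (cball 0 1) (eval_fps f)" using hol by (rule holomorphic_on_imp_continuous_on)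
    show "norm (eval_fps f x) \<le> norm C" if "norm (0 - x) = 1" for x
      using norm_eval_slice_fps_less[OF J holo maps Y h, of C x] False that
      by (simp add: f_def C_def)
  qed simp
  moreover have "deriv (eval_fps f) 0 = eval_fps (fps_deriv f) 0"
  proof (intro DERIV_imp_deriv has_field_derivative_eval_fps)
    have "ereal (norm (0::complex)) < 1" by simp
    thus "ereal (norm (0::complex)) < fps_conv_radius f" using rad by (rule less_trans)
  qed
  moreover have "eval_fps (fps_deriv f) 0 = complex_of_real ((norm C)\<^sup>2)"
    by (simp add: eval_fps_at_0 f_def slice_fps_def C_def cinner_self[OF J])
  ultimately have "(norm C)\<^sup>2 \<le> norm C * 1" by (simp add: norm_power)
  thus ?thesis using le_of_square_le_mult[of "norm C" 1] by (simp add: C_def)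
qed simp

text \<open>Schwarz's lemma applied to the slice function z \<mapsto> \<langle>F(zY)h, v\<rangle> / norm v with
  v = F(sY)h: when F(0) = 0 it vanishes at 0, and it maps the open disc into itself.\<close>

lemma norm_freeval_tscale_le:
  assumes holo: "\<forall>j<m. free_holo n (a j)"
    and maps: "\<forall>X\<in>ncball J n. (\<lambda>j. freeval J n (a j) X) \<in> ncball J m"
    and a0: "\<forall>j<m. a j [] = 0"
    and Y: "Y \<in> ncball J n" and h: "(\<Sum>j<m. (norm (h j))\<^sup>2) \<le> 1"
    and s: "0 \<le> s" "s < 1"
  shows "norm (\<Sum>j<m. freeval J n (a j) (tscale J (complex_of_real s) Y) (h j)) \<le> s"
proof (cases "(\<Sum>j<m. freeval J n (a j) (tscale J (complex_of_real s) Y) (h j)) = 0")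
  case False
  define v where "v = (\<Sum>j<m. freeval J n (a j) (tscale J (complex_of_real s) Y) (h j))"
  have v0: "v \<noteq> 0" using False by (simp add: v_def)
  define f where "f = slice_fps J m n a Y h v"
  define g where "g z = eval_fps f z / complex_of_real (norm v)" for z
  have Yb: "\<forall>i<n. bop J (Y i)" and Y1: "rownorm n Y < 1" using Y by (auto simp: ncball_def)
  have "ball (0::complex) 1 \<subseteq> eball 0 (fps_conv_radius f)"
    unfolding f_def
    by (rule order_trans[OF ball_subset_cball cball_subset_eball[OF slice_fps_radius[OF J holo Yb Y1]]])
  hence "g holomorphic_on ball 0 1"
    unfolding g_def using v0 by (intro holomorphic_intros holomorphic_on_eval_fps) simp_all
  moreover have "g 0 = 0"
  proof -
    have "(\<Sum>j<m. homog J n (a j) 0 Y (h j)) = 0" using a0 by (simp add: homog_0)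
    thus ?thesis by (simp add: g_def f_def eval_fps_at_0 slice_fps_def cinner_def complex_eq_iff)
  qed
  moreover have "norm (g z) < 1" if "norm z < 1" for z
    using norm_eval_slice_fps_less[OF J holo maps Y h v0, of z] that v0
    by (simp add: g_def f_def norm_divide divide_less_eq)
  ultimately have "norm (g (complex_of_real s)) \<le> norm (complex_of_real s)"
    using s by (intro Schwarz_Lemma(1)) simp_all
  moreover have "g (complex_of_real s) = complex_of_real (norm v)"
    using eval_slice_fps[OF J holo Yb Y1, of "complex_of_real s" h v] s v0
    by (simp add: g_def f_def v_def[symmetric] cinner_self[OF J] power2_eq_square)
  ultimately show ?thesis using s by (simp add: v_def)
qed (use s in simp)

end

context
  fixes J :: "'h::{real_inner,complete_space} \<Rightarrow> 'h"
  assumes J: "cstruct J"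
begin

lemma bop_linpart:
  assumes "\<forall>i<n. bop J (X i)"
  shows "bop J (linpart J n a X j)"
  unfolding linpart_def
  using assms bop_comp[OF J bop_cscale[OF J]] by (intro bop_sum[OF J]) (simp add: comp_def)

text \<open>Part (i): the linear part \<phi>(X) = [X_1 ... X_n] F'(0)^t does not increase the norm.
  Writing X = sY with Y in the ball, \<phi>(X) h = s F_1(Y) h and norm (F_1(Y) h) \<le> 1.\<close>

lemma rownorm_linpart_le:
  assumes holo: "\<forall>j<m. free_holo n (a j)"
    and maps: "\<forall>X\<in>ncball J n. (\<lambda>j. freeval J n (a j) X) \<in> ncball J m"
    and X: "X \<in> ncball J n"
  shows "rownorm m (linpart J n a X) \<le> rownorm n X"
proof (rule dense_ge_bounded)
  show "rownorm n X < 1" using X by (simp add: ncball_def)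
  fix s assume s: "rownorm n X < s" "s < 1"
  define Y where "Y = tscale J (complex_of_real (1 / s)) X"
  have Y: "Y \<in> ncball J n" and XY: "tscale J (complex_of_real s) Y = X"
    using ball_rescale[OF J X s] by (simp_all add: Y_def)
  have s0: "0 \<le> s" using s rownorm_nonneg_ncball[OF X] by linarith
  have linpart: "linpart J n a X j x = s *\<^sub>R homog J n (a j) 1 Y x" for j x
    unfolding linpart_def homog_1 XY[symmetric]
    by (simp add: tscale_def cscale_scaleR[OF J] scaleR_sum_right)
  show "rownorm m (linpart J n a X) \<le> s"
  proof (rule rownorm_le)
    fix h :: "nat \<Rightarrow> 'h" assume h: "(\<Sum>j<m. (norm (h j))\<^sup>2) \<le> 1"
    have "norm (\<Sum>j<m. linpart J n a X j (h j)) = s * norm (\<Sum>j<m. homog J n (a j) 1 Y (h j))"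
      using s0 by (simp add: linpart scaleR_sum_right[symmetric])
    also have "\<dots> \<le> s * 1"
      using norm_linear_part_le_one[OF J holo maps Y h] s0 by (rule mult_left_mono)
    finally show "norm (\<Sum>j<m. linpart J n a X j (h j)) \<le> s" by simp
  qed
qed

lemma linpart_in_ncball:
  assumes holo: "\<forall>j<m. free_holo n (a j)"
    and maps: "\<forall>X\<in>ncball J n. (\<lambda>j. freeval J n (a j) X) \<in> ncball J m"
    and X: "X \<in> ncball J n"
  shows "linpart J n a X \<in> ncball J m"
  using rownorm_linpart_le[OF holo maps X] X bop_linpart
  by (auto simp: ncball_def intro: le_less_trans)

lemma rownorm_freeval_le:
  assumes holo: "\<forall>j<m. free_holo n (a j)"
    and maps: "\<forall>X\<in>ncball J n. (\<lambda>j. freeval J n (a j) X) \<in> ncball J m"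
    and a0: "\<forall>j<m. a j [] = 0"
    and X: "X \<in> ncball J n"
  shows "rownorm m (\<lambda>j. freeval J n (a j) X) \<le> rownorm n X"
proof (rule dense_ge_bounded)
  show "rownorm n X < 1" using X by (simp add: ncball_def)
  fix s assume s: "rownorm n X < s" "s < 1"
  define Y where "Y = tscale J (complex_of_real (1 / s)) X"
  have Y: "Y \<in> ncball J n" and XY: "tscale J (complex_of_real s) Y = X"
    using ball_rescale[OF J X s] by (simp_all add: Y_def)
  have s0: "0 \<le> s" using s rownorm_nonneg_ncball[OF X] by linarith
  show "rownorm m (\<lambda>j. freeval J n (a j) X) \<le> s"
    using norm_freeval_tscale_le[OF J holo maps a0 Y _ s0 s(2)] unfolding XY
    by (intro rownorm_le)
qed

end

context
  fixes J :: "'h::{real_inner,complete_space} \<Rightarrow> 'h"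
  assumes J: "cstruct J"
begin

lemma rownorm_scalar_tuple:
  fixes u :: 'h
  assumes u: "norm u = 1"
  shows "rownorm n (\<lambda>i. cscale J (z i)) = sqrt (\<Sum>i<n. (cmod (z i))\<^sup>2)"
proof (rule antisym)
  show "rownorm n (\<lambda>i. cscale J (z i)) \<le> sqrt (\<Sum>i<n. (cmod (z i))\<^sup>2)"
  proof (rule rownorm_le)
    fix h :: "nat \<Rightarrow> 'h" assume h: "(\<Sum>i<n. (norm (h i))\<^sup>2) \<le> 1"
    have "norm (\<Sum>i<n. cscale J (z i) (h i)) \<le> (\<Sum>i<n. \<bar>cmod (z i)\<bar> * \<bar>norm (h i)\<bar>)"
      using norm_sum[of "\<lambda>i. cscale J (z i) (h i)" "{..<n}"] by (simp add: norm_cscale[OF J])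
    also have "\<dots> \<le> L2_set (\<lambda>i. cmod (z i)) {..<n} * L2_set (\<lambda>i. norm (h i)) {..<n}"
      by (rule L2_set_mult_ineq)
    also have "\<dots> \<le> L2_set (\<lambda>i. cmod (z i)) {..<n} * 1"
      using h by (intro mult_left_mono) (simp_all add: L2_set_def L2_set_nonneg sum_nonneg)
    finally show "norm (\<Sum>i<n. cscale J (z i) (h i)) \<le> sqrt (\<Sum>i<n. (cmod (z i))\<^sup>2)"
      by (simp add: L2_set_def)
  qed
  show "sqrt (\<Sum>i<n. (cmod (z i))\<^sup>2) \<le> rownorm n (\<lambda>i. cscale J (z i))"
  proof (cases "(\<Sum>i<n. (cmod (z i))\<^sup>2) = 0")
    case True
    thus ?thesis by (simp add: rownorm_nonneg bounded_linear_cscale[OF J])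
  next
    case False
    define W where "W = sqrt (\<Sum>i<n. (cmod (z i))\<^sup>2)"
    have W: "W > 0" using False by (simp add: W_def sum_nonneg order_le_neq_trans)
    define h where "h i = (1 / W) *\<^sub>R cscale J (cnj (z i)) u" for i
    have "(\<Sum>i<n. (norm (h i))\<^sup>2) = (\<Sum>i<n. (cmod (z i))\<^sup>2) / W\<^sup>2"
      using W u by (simp add: h_def norm_cscale[OF J] power_divide sum_divide_distrib)
    hence h1: "(\<Sum>i<n. (norm (h i))\<^sup>2) \<le> 1" using W by (simp add: W_def sum_nonneg)
    have "cscale J (z i) (h i) = ((cmod (z i))\<^sup>2 / W) *\<^sub>R u" for i
      by (simp add: h_def cscale_scaleR[OF J] cscale_mult[OF J, symmetric]
          complex_norm_square[symmetric] del: complex_mult_cnj flip: of_real_power)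
    hence "(\<Sum>i<n. cscale J (z i) (h i)) = ((\<Sum>i<n. (cmod (z i))\<^sup>2) / W) *\<^sub>R u"
      by (simp add: scaleR_sum_left sum_divide_distrib)
    also have "\<dots> = W *\<^sub>R u" using W by (simp add: W_def sum_nonneg real_div_sqrt)
    finally have "norm (\<Sum>i<n. cscale J (z i) (h i)) = W" using u W by simp
    thus ?thesis
      using rownorm_ge[OF _ h1, of "\<lambda>i. cscale J (z i)"] by (simp add: W_def bounded_linear_cscale[OF J])
  qed
qed

lemma linpart_scalar_tuple:
  "linpart J n a (\<lambda>i. cscale J (z i)) j = cscale J (\<Sum>i<n. a j [i] * z i)"
  by (simp add: fun_eq_iff linpart_def cscale_mult[OF J, symmetric] cscale_sum_left[OF J])

text \<open>Testing \<phi> on the scalar tuples t z I with t < 1 gives norm (F'(0) z) \<le> 1 for unit z.\<close>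

lemma derivnorm_le_one:
  fixes u :: 'h
  assumes u: "norm u = 1"
    and lin: "\<forall>X\<in>ncball J n. linpart J n a X \<in> ncball J m"
  shows "derivnorm m n a \<le> 1"
  unfolding derivnorm_def
proof (rule cSup_least)
  show "{sqrt (\<Sum>j<m. (cmod (\<Sum>i<n. a j [i] * z i))\<^sup>2) |z. (\<Sum>i<n. (cmod (z i))\<^sup>2) \<le> 1} \<noteq> {}"
    by (auto intro!: exI[of _ "\<lambda>_::nat. 0::complex"])
next
  fix y assume "y \<in> {sqrt (\<Sum>j<m. (cmod (\<Sum>i<n. a j [i] * z i))\<^sup>2) |z. (\<Sum>i<n. (cmod (z i))\<^sup>2) \<le> 1}"
  then obtain z where z: "(\<Sum>i<n. (cmod (z i))\<^sup>2) \<le> 1"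
    and y: "y = sqrt (\<Sum>j<m. (cmod (\<Sum>i<n. a j [i] * z i))\<^sup>2)" by blast
  show "y \<le> 1"
  proof (rule field_le_mult_one_interval)
    fix t :: real assume t: "0 < t" "t < 1"
    define X where "X = (\<lambda>i. cscale J (complex_of_real t * z i))"
    have "rownorm n X = sqrt (\<Sum>i<n. (cmod (complex_of_real t * z i))\<^sup>2)"
      unfolding X_def by (rule rownorm_scalar_tuple[OF u])
    also have "\<dots> = t * sqrt (\<Sum>i<n. (cmod (z i))\<^sup>2)"
      using t by (simp add: norm_mult power_mult_distrib sum_distrib_left[symmetric] real_sqrt_mult)
    also have "\<dots> \<le> t * 1" using t z by (intro mult_left_mono) simp_all
    also have "\<dots> < 1" using t by simp
    finally have "X \<in> ncball J n" by (simp add: ncball_def X_def bop_cscale[OF J])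
    hence "rownorm m (linpart J n a X) < 1" using lin by (simp add: ncball_def)
    moreover have "linpart J n a X = (\<lambda>j. cscale J (complex_of_real t * (\<Sum>i<n. a j [i] * z i)))"
      by (simp add: fun_eq_iff X_def linpart_scalar_tuple sum_distrib_left mult_ac)
    hence "rownorm m (linpart J n a X)
             = sqrt (\<Sum>j<m. (cmod (complex_of_real t * (\<Sum>i<n. a j [i] * z i)))\<^sup>2)"
      by (simp add: rownorm_scalar_tuple[OF u])
    hence "rownorm m (linpart J n a X) = t * y"
      using t by (simp add: y norm_mult power_mult_distrib sum_distrib_left[symmetric] real_sqrt_mult)
    ultimately show "t * y \<le> 1" by simp
  qed
qed

end

theorem mainTheorem16:
  fixes J :: "'h::{real_inner,complete_space} \<Rightarrow> 'h"
    and n m :: nat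
    and a :: "nat \<Rightarrow> nat list \<Rightarrow> complex"
  assumes J: "cstruct J"
    and sep: "\<exists>D::'h set. countable D \<and> closure D = UNIV"
    and infdim: "\<not> (\<exists>S::'h set. finite S \<and> span S = UNIV)"
    and n: "n \<ge> 1" and m: "m \<ge> 1"
    and holo: "\<forall>j<m. free_holo n (a j)"
    and maps: "\<forall>X\<in>ncball J n. (\<lambda>j. freeval J n (a j) X) \<in> ncball J m"
  shows "(\<forall>X\<in>ncball J n. linpart J n a X \<in> ncball J m)
         \<and> derivnorm m n a \<le> 1
         \<and> ((\<forall>j<m. a j [] = 0) \<longrightarrow>
              (\<forall>X\<in>ncball J n. rownorm m (\<lambda>j. freeval J n (a j) X) \<le> rownorm n X))"
proof -
  txt \<open>An infinite-dimensional H contains a unit vector, needed to test F'(0).\<close>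
  obtain v :: 'h where "v \<noteq> 0"
    using infdim by (metis finite.emptyI span_empty UNIV_eq_I singletonI)
  hence u: "norm ((1 / norm v) *\<^sub>R v) = 1" by simp
  have linear_part: "\<forall>X\<in>ncball J n. linpart J n a X \<in> ncball J m"
    using linpart_in_ncball[OF J holo maps] by blast
  moreover have "derivnorm m n a \<le> 1"
    by (rule derivnorm_le_one[OF J u linear_part])
  moreover have "(\<forall>j<m. a j [] = 0) \<longrightarrow>
                   (\<forall>X\<in>ncball J n. rownorm m (\<lambda>j. freeval J n (a j) X) \<le> rownorm n X)"
    using rownorm_freeval_le[OF J holo maps] by blast
  ultimately show ?thesis by blast
qed

end
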